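(* Let $m\ge 1$ be an integer, $\Gamma_1,\Gamma_2$ co-prime integers with $1<\Gamma_1<\Gamma_2$, $m_1=m\Gamma_1$, $m_2=m\Gamma_2$, and $\sigma_1=|\Gamma_2|_{\Gamma_1}\ge 2$. Let $N$ be an integer with $0\le N< m_1\left(1+\lfloor m_2/m_1\rfloor\lfloor m_1/|m_2|_{m_1}\rfloor\right)$, write $N=n_im_i+r_i$ with $0\le r_i<m_i$ ($i=1,2$), and let $\tilde r_1,\tilde r_2$ be erroneous remainders with errors $\Delta r_i=\tilde r_i-r_i$ satisfying $-\sigma_1/2\le (\Delta r_1-\Delta r_2)/m<\sigma_1/2$. Let $\mathbf q_{21}=(\tilde r_1-\tilde r_2)/m$ and suppose $\mathbf q_{21}<-\sigma_1/2$. If $$\frac{\sigma_1}{2}\le \mathbf q_{21}-\left\lfloor\frac{\mathbf q_{21}}{\Gamma_1}\right\rfloor\Gamma_1<\left\lfloor\frac{\Gamma_1}{\sigma_1}\right\rfloor\sigma_1-\frac{\sigma_1}{2},$$ then $1\le n_2\le \lfloor\Gamma_1/\sigma_1\rfloor-1$; otherwise $n_2=0$.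
   Context: $|a|_b$ denotes the remainder of the integer $a$ modulo the positive integer $b$ (in $[0,b)$). Erroneous remainders are integers $\tilde r_i$ with $0\le \tilde r_i<m_i$. *)

theory Defs
  imports Complex_Main
begin

end

theory Submission
  imports Defs
begin

text \<open>Write \<open>s = \<Gamma>2 mod \<Gamma>1\<close>, \<open>a = \<Gamma>2 div \<Gamma>1\<close>, \<open>k = \<Gamma>1 div s\<close> and \<open>n\<^sub>i = N div m\<^sub>i\<close>.
  The true remainders satisfy \<open>r\<^sub>1 - r\<^sub>2 = m d\<close> with \<open>d = (n\<^sub>2 a - n\<^sub>1) \<Gamma>1 + n\<^sub>2 s\<close>, so
  \<open>q\<^sub>2\<^sub>1 = d + e\<close> where \<open>e\<close> is the scaled error, \<open>|e| \<le> s/2\<close>. Since \<open>q\<^sub>2\<^sub>1 < -s/2\<close>, \<open>d < 0\<close>,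
  i.e. \<open>n\<^sub>2 a < n\<^sub>1\<close>; the bound on \<open>N\<close> gives \<open>n\<^sub>1 \<le> a k\<close>, hence \<open>0 \<le> n\<^sub>2 < k\<close>. Then \<open>n\<^sub>2 s + e\<close>
  lies in \<open>[0, \<Gamma>1)\<close> when \<open>n\<^sub>2 \<ge> 1\<close>, so it is the remainder of \<open>q\<^sub>2\<^sub>1\<close> modulo \<open>\<Gamma>1\<close> and lies in the
  window; when \<open>n\<^sub>2 = 0\<close> that remainder is \<open>e\<close> or \<open>\<Gamma>1 + e\<close>, both outside the window.\<close>

lemma floor_div_remainder_eq:
  fixes t :: int and G w :: real
  assumes "0 < G" "0 \<le> w" "w < G"
  shows "(of_int t * G + w) - of_int \<lfloor>(of_int t * G + w) / G\<rfloor> * G = w"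
proof -
  have "(of_int t * G + w) / G = of_int t + w / G"
    using assms by (simp add: field_simps)
  moreover have "0 \<le> w / G" "w / G < 1"
    using assms by auto
  ultimately have "\<lfloor>(of_int t * G + w) / G\<rfloor> = t"
    by (simp add: floor_eq_iff)
  then show ?thesis by simp
qed

lemma floor_div_remainder_window_iff:
  fixes G s k n t :: int and e q :: real
  assumes s: "0 < s" and ks: "k * s \<le> G" and n: "0 \<le> n" "n < k"
    and e: "- of_int s / 2 \<le> e" "e < of_int s / 2"
    and q: "q = of_int (t * G + n * s) + e"
  shows "(of_int s / 2 \<le> q - of_int \<lfloor>q / of_int G\<rfloor> * of_int G
          \<and> q - of_int \<lfloor>q / of_int G\<rfloor> * of_int G < of_int k * of_int s - of_int s / 2)
         \<longleftrightarrow> 1 \<le> n"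
proof -
  have ks_real: "of_int k * of_int s \<le> (of_int G :: real)"
    using ks by (metis of_int_le_iff of_int_mult)
  have "s \<le> k * s" using s n by simp
  then have s_le_G: "of_int s \<le> (of_int G :: real)" using ks by linarith
  have G: "0 < (of_int G :: real)" using s s_le_G by linarith
  show ?thesis
  proof (cases "1 \<le> n")
    case True
    have "s \<le> n * s" "n * s \<le> (k - 1) * s"
      using True n s by (simp_all add: mult_right_mono)
    then have w: "of_int s \<le> of_int n * (of_int s :: real)"
      "of_int n * of_int s \<le> of_int k * of_int s - (of_int s :: real)"
      by (simp_all add: left_diff_distrib flip: of_int_mult of_int_le_iff)
    have "q = of_int t * of_int G + (of_int n * of_int s + e)"
      using q by simp
    also have "\<dots> - of_int \<lfloor>\<dots> / of_int G\<rfloor> * of_int G = of_int n * of_int s + e"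
      using w e ks_real s by (intro floor_div_remainder_eq[OF G]) linarith+
    finally have v: "q - of_int \<lfloor>q / of_int G\<rfloor> * of_int G = of_int n * of_int s + e" .
    have "of_int s / 2 \<le> of_int n * of_int s + e"
      "of_int n * of_int s + e < of_int k * of_int s - of_int s / 2"
      using w e by linarith+
    with v True show ?thesis by simp
  next
    case False
    then have n0: "n = 0" using n by simp
    show ?thesis
    proof (cases "0 \<le> e")
      case True
      have "q = of_int t * of_int G + e" using q n0 by simp
      also have "\<dots> - of_int \<lfloor>\<dots> / of_int G\<rfloor> * of_int G = e"
        using True e s_le_G by (intro floor_div_remainder_eq[OF G]) linarith+
      finally show ?thesis using e False by simp
    next
      case neg: False
      have "q = of_int (t - 1) * of_int G + (of_int G + e)"
        using q n0 by (simp add: algebra_simps)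
      also have "\<dots> - of_int \<lfloor>\<dots> / of_int G\<rfloor> * of_int G = of_int G + e"
        using neg e s_le_G by (intro floor_div_remainder_eq[OF G]) linarith+
      finally show ?thesis using e neg False ks_real by simp
    qed
  qed
qed

lemma mod_diff_mod_eq:
  fixes N m G1 G2 :: int
  shows "N mod (m * G1) - N mod (m * G2)
         = m * ((N div (m * G2) * (G2 div G1) - N div (m * G1)) * G1 + N div (m * G2) * (G2 mod G1))"
proof -
  have "G2 = G2 div G1 * G1 + G2 mod G1" by simp
  then have "N div (m * G2) * (m * G2)
             = m * (N div (m * G2) * (G2 div G1) * G1 + N div (m * G2) * (G2 mod G1))"
    by (metis distrib_left mult.assoc mult.commute)
  moreover have "N mod (m * G1) - N mod (m * G2) = N div (m * G2) * (m * G2) - N div (m * G1) * (m * G1)"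
    by (simp add: minus_div_mult_eq_mod [symmetric])
  ultimately show ?thesis by (simp add: algebra_simps)
qed

lemma div_less_of_mod_less:
  fixes N m G1 G2 k :: int
  assumes m: "0 < m" and G1: "0 < G1" and G2: "0 \<le> G2" and N: "0 \<le> N"
    and N_less: "N < m * G1 * (1 + G2 div G1 * k)"
    and mod_less: "N mod (m * G1) < N mod (m * G2)"
  shows "N div (m * G2) < k"
proof -
  define a n1 n2 where "a = G2 div G1" and "n1 = N div (m * G1)" and "n2 = N div (m * G2)"
  have mG1: "0 < m * G1" using m G1 by simp
  have "n1 * (m * G1) \<le> N"
    unfolding n1_def using mG1 by (metis minus_div_mult_eq_mod diff_ge_0_iff_ge pos_mod_sign)
  with N_less have "m * G1 * n1 < m * G1 * (1 + a * k)"
    unfolding a_def by (simp add: algebra_simps)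
  then have n1_le: "n1 \<le> a * k"
    using mG1 by (simp add: mult_less_cancel_left)
  have "n2 * (m * G2) < n1 * (m * G1)"
    using mod_less unfolding n1_def n2_def by (simp add: minus_div_mult_eq_mod [symmetric])
  then have "m * (n2 * G2) < m * (n1 * G1)" by (simp add: algebra_simps)
  then have n2_less: "n2 * G2 < n1 * G1" using m by simp
  have "0 \<le> n2" unfolding n2_def using N m G2 by (simp add: div_int_pos_iff)
  moreover have "a * G1 \<le> G2"
    unfolding a_def by (metis div_mult_mod_eq G1 le_add_same_cancel1 pos_mod_sign mult.commute)
  ultimately have "n2 * a * G1 \<le> n2 * G2" by (metis mult.assoc mult_left_mono)
  also have "\<dots> < n1 * G1" by (fact n2_less)
  also have "\<dots> \<le> a * k * G1" using n1_le G1 by simp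
  finally have "n2 * a < k * a" using G1 by (simp add: algebra_simps)
  moreover have "0 \<le> a" unfolding a_def using G1 G2 by (simp add: pos_imp_zdiv_nonneg_iff)
  ultimately show ?thesis unfolding n2_def by (smt (verit) mult_right_mono)
qed

theorem lemma3:
  fixes m \<Gamma>1 \<Gamma>2 N rt1 rt2 :: int
  assumes hm: "m \<ge> 1"
    and hcop: "coprime \<Gamma>1 \<Gamma>2"
    and hG: "1 < \<Gamma>1" "\<Gamma>1 < \<Gamma>2"
    and hsig: "\<Gamma>2 mod \<Gamma>1 \<ge> 2"
    and hN: "0 \<le> N"
      "N < (m * \<Gamma>1) * (1 + ((m * \<Gamma>2) div (m * \<Gamma>1))
                              * ((m * \<Gamma>1) div ((m * \<Gamma>2) mod (m * \<Gamma>1))))"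
    and hr1: "0 \<le> rt1" "rt1 < m * \<Gamma>1"
    and hr2: "0 \<le> rt2" "rt2 < m * \<Gamma>2"
    and herr: "- real_of_int (\<Gamma>2 mod \<Gamma>1) / 2
                 \<le> real_of_int ((rt1 - N mod (m * \<Gamma>1)) - (rt2 - N mod (m * \<Gamma>2))) / real_of_int m"
              "real_of_int ((rt1 - N mod (m * \<Gamma>1)) - (rt2 - N mod (m * \<Gamma>2))) / real_of_int m
                 < real_of_int (\<Gamma>2 mod \<Gamma>1) / 2"
    and hq: "real_of_int (rt1 - rt2) / real_of_int m < - real_of_int (\<Gamma>2 mod \<Gamma>1) / 2"
  shows "(let \<sigma>1 = real_of_int (\<Gamma>2 mod \<Gamma>1);
              q21 = real_of_int (rt1 - rt2) / real_of_int m;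
              v = q21 - real_of_int \<lfloor>q21 / real_of_int \<Gamma>1\<rfloor> * real_of_int \<Gamma>1;
              n2 = N div (m * \<Gamma>2)
          in (if \<sigma>1 / 2 \<le> v \<and> v < real_of_int (\<Gamma>1 div (\<Gamma>2 mod \<Gamma>1)) * \<sigma>1 - \<sigma>1 / 2
              then 1 \<le> n2 \<and> n2 \<le> \<Gamma>1 div (\<Gamma>2 mod \<Gamma>1) - 1
              else n2 = 0))"
proof -
  define s k n2 where "s = \<Gamma>2 mod \<Gamma>1" and "k = \<Gamma>1 div s" and "n2 = N div (m * \<Gamma>2)"
  define t where "t = n2 * (\<Gamma>2 div \<Gamma>1) - N div (m * \<Gamma>1)"
  define e where "e = real_of_int ((rt1 - N mod (m * \<Gamma>1)) - (rt2 - N mod (m * \<Gamma>2))) / real_of_int m"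
  define q where "q = real_of_int (rt1 - rt2) / real_of_int m"
  have s: "0 < s" using hsig unfolding s_def by simp
  have e: "- of_int s / 2 \<le> e" "e < of_int s / 2"
    using herr unfolding e_def s_def by simp_all
  have mod_diff: "N mod (m * \<Gamma>1) - N mod (m * \<Gamma>2) = m * (t * \<Gamma>1 + n2 * s)"
    unfolding t_def n2_def s_def by (rule mod_diff_mod_eq)
  then have "rt1 - rt2 = m * (t * \<Gamma>1 + n2 * s) + ((rt1 - N mod (m * \<Gamma>1)) - (rt2 - N mod (m * \<Gamma>2)))"
    by simp
  then have "real_of_int (rt1 - rt2) = of_int m * of_int (t * \<Gamma>1 + n2 * s)
             + real_of_int ((rt1 - N mod (m * \<Gamma>1)) - (rt2 - N mod (m * \<Gamma>2)))"
    by (metis of_int_add of_int_mult)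
  then have q_eq: "q = of_int (t * \<Gamma>1 + n2 * s) + e"
    using hm unfolding q_def e_def by (simp add: field_simps)
  have "t * \<Gamma>1 + n2 * s < 0"
    using q_eq e hq unfolding q_def s_def by linarith
  then have "m * (t * \<Gamma>1 + n2 * s) < 0"
    using hm by (simp add: mult_pos_neg)
  then have "N mod (m * \<Gamma>1) < N mod (m * \<Gamma>2)"
    using mod_diff by linarith
  moreover have "N < m * \<Gamma>1 * (1 + \<Gamma>2 div \<Gamma>1 * k)"
    using hN(2) hm unfolding k_def s_def by simp
  ultimately have "n2 < k"
    unfolding n2_def using hm hG hN(1) by (intro div_less_of_mod_less) auto
  have "0 \<le> n2"
    unfolding n2_def using hN(1) hm hG by (simp add: div_int_pos_iff)
  have "k * s \<le> \<Gamma>1"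
  proof -
    have "k * s + \<Gamma>1 mod s = \<Gamma>1" "0 \<le> \<Gamma>1 mod s"
      using s unfolding k_def by (simp_all add: div_mult_mod_eq)
    then show ?thesis by linarith
  qed
  from floor_div_remainder_window_iff [OF s this \<open>0 \<le> n2\<close> \<open>n2 < k\<close> e q_eq] \<open>0 \<le> n2\<close> \<open>n2 < k\<close>
  show ?thesis
    unfolding Let_def q_def [symmetric] s_def [symmetric] k_def [symmetric] n2_def [symmetric]
    by auto
qed

end
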